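(* Let $\mathbb{K}$ be a semiring. Every two-way $\mathbb{K}$-automaton admits a $\delta$-local in-covering.
   Context: With $A_{\vdash\dashv}=A\cup\{\vdash,\dashv\}$ ($\vdash,\dashv$ fresh end-markers), a two-way $\mathbb{K}$-automaton $(Q,A,E,I,T)$ has finite state set $Q$, partial functions $I,T:Q\to\mathbb{K}$ (supports $\underline I$, $\underline T$: initial/final states), and a partial function $E:Q\times(A_{\vdash\dashv}\times\{-1,+1\})\times Q\to\mathbb{K}$ whose support $\underline E$ (the transitions) contains no $(p,\vdash,-1,q)$ nor $(p,\dashv,+1,q)$. For $t=(p,a,d,q)$: $\sigma(t)=p$, $\tau(t)=q$, $\delta(t)=d$. A two-way automaton is $\delta$-local if for each state $p$ all transitions outgoing from $p$ have the same direction $\delta$. A morphism from $\mathcal{A}=(Q,A,E,I,T)$ to $\mathcal{B}=(R,A,F,J,U)$ is a map $\varphi:Q\to R$ with $J(\varphi(p))=I(p)$ for $p\in\underline I$, $U(\varphi(p))=T(p)$ for $p\in\underline T$, and for each $t=(p,a,d,q)\in\underline E$, $\tilde\varphi(t)=(\varphi(p),a,d,\varphi(q))\in\underline F$ with $F(\tilde\varphi(t))=E(t)$; it is surjective if $\varphi(Q)=R$, $\varphi(\underline I)=\underline J$, $\varphi(\underline T)=\underline U$, $\tilde\varphi(\underline E)=\underline F$. $\mathcal{A}$ is an in-covering of $\mathcal{B}$ if there is a surjective morphism $\varphi$ such that: for all $r\in\underline J$, $\varphi^{-1}(r)\subseteq\underline I$; for all $r\in\underline U$ there is exactly one $p\in\varphi^{-1}(r)\cap\underline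 T$; for all $t\in\underline F$ and all $q\in\varphi^{-1}(\tau(t))$ there is exactly one $t'\in\underline E$ with $\tilde\varphi(t')=t$ and $\tau(t')=q$. *)

theory Defs
  imports Main
begin

text \<open>Letters of the extended alphabet A_{|-,-|} = A plus two fresh end-markers.\<close>
datatype 'a letter = Sym 'a | LMark | RMark

text \<open>Directions: Lft stands for -1, Rgt stands for +1.\<close>
datatype dir = Lft | Rgt

text \<open>A two-way K-automaton (Q, A, E, I, T); partial functions are option-valued.\<close>
record ('q, 'a, 'k) twa =
  states :: "'q set"
  alph   :: "'a set"
  trans  :: "'q \<Rightarrow> 'a letter \<Rightarrow> dir \<Rightarrow> 'q \<Rightarrow> 'k option"
  init   :: "'q \<Rightarrow> 'k option"
  fin    :: "'q \<Rightarrow> 'k option"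

definition ext_alph :: "'a set \<Rightarrow> 'a letter set" where
  "ext_alph A = Sym ` A \<union> {LMark, RMark}"

definition init_supp :: "('q,'a,'k) twa \<Rightarrow> 'q set" where
  "init_supp M = {p. init M p \<noteq> None}"

definition fin_supp :: "('q,'a,'k) twa \<Rightarrow> 'q set" where
  "fin_supp M = {p. fin M p \<noteq> None}"

definition transitions :: "('q,'a,'k) twa \<Rightarrow> ('q \<times> 'a letter \<times> dir \<times> 'q) set" where
  "transitions M = {(p, a, d, q). trans M p a d q \<noteq> None}"

definition wf_twa :: "('q,'a,'k) twa \<Rightarrow> bool" where
  "wf_twa M \<longleftrightarrow> finite (states M) \<and>
     init_supp M \<subseteq> states M \<and> fin_supp M \<subseteq> states M \<and>
     (\<forall>(p, a, d, q) \<in> transitions M. p \<in> states M \<and> q \<in> states M \<and> a \<in> ext_alph (alph M)) \<and>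
     (\<forall>p q. trans M p LMark Lft q = None) \<and>
     (\<forall>p q. trans M p RMark Rgt q = None)"

definition src :: "'q \<times> 'a letter \<times> dir \<times> 'q \<Rightarrow> 'q" where
  "src t = (case t of (p, a, d, q) \<Rightarrow> p)"

definition tgt :: "'q \<times> 'a letter \<times> dir \<times> 'q \<Rightarrow> 'q" where
  "tgt t = (case t of (p, a, d, q) \<Rightarrow> q)"

definition direction :: "'q \<times> 'a letter \<times> dir \<times> 'q \<Rightarrow> dir" where
  "direction t = (case t of (p, a, d, q) \<Rightarrow> d)"

definition delta_local :: "('q,'a,'k) twa \<Rightarrow> bool" where
  "delta_local M \<longleftrightarrow> (\<forall>t \<in> transitions M. \<forall>t' \<in> transitions M.
      src t = src t' \<longrightarrow> direction t = direction t')"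

definition lift_trans :: "('q \<Rightarrow> 'r) \<Rightarrow> 'q \<times> 'a letter \<times> dir \<times> 'q \<Rightarrow> 'r \<times> 'a letter \<times> dir \<times> 'r" where
  "lift_trans \<phi> t = (case t of (p, a, d, q) \<Rightarrow> (\<phi> p, a, d, \<phi> q))"

definition is_morphism :: "('q \<Rightarrow> 'r) \<Rightarrow> ('q,'a,'k) twa \<Rightarrow> ('r,'a,'k) twa \<Rightarrow> bool" where
  "is_morphism \<phi> M N \<longleftrightarrow>
     alph M = alph N \<and>
     \<phi> ` states M \<subseteq> states N \<and>
     (\<forall>p \<in> init_supp M. init N (\<phi> p) = init M p) \<and>
     (\<forall>p \<in> fin_supp M. fin N (\<phi> p) = fin M p) \<and>
     (\<forall>p a d q. trans M p a d q \<noteq> None \<longrightarrow> trans N (\<phi> p) a d (\<phi> q) = trans M p a d q)"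

definition is_surj_morphism :: "('q \<Rightarrow> 'r) \<Rightarrow> ('q,'a,'k) twa \<Rightarrow> ('r,'a,'k) twa \<Rightarrow> bool" where
  "is_surj_morphism \<phi> M N \<longleftrightarrow> is_morphism \<phi> M N \<and>
     \<phi> ` states M = states N \<and>
     \<phi> ` init_supp M = init_supp N \<and>
     \<phi> ` fin_supp M = fin_supp N \<and>
     lift_trans \<phi> ` transitions M = transitions N"

definition is_in_covering_via :: "('q \<Rightarrow> 'r) \<Rightarrow> ('q,'a,'k) twa \<Rightarrow> ('r,'a,'k) twa \<Rightarrow> bool" where
  "is_in_covering_via \<phi> M N \<longleftrightarrow> is_surj_morphism \<phi> M N \<and>
     (\<forall>r \<in> init_supp N. {p \<in> states M. \<phi> p = r} \<subseteq> init_supp M) \<and>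
     (\<forall>r \<in> fin_supp N. \<exists>!p. p \<in> states M \<and> \<phi> p = r \<and> p \<in> fin_supp M) \<and>
     (\<forall>t \<in> transitions N. \<forall>q \<in> states M. \<phi> q = tgt t \<longrightarrow>
        (\<exists>!t'. t' \<in> transitions M \<and> lift_trans \<phi> t' = t \<and> tgt t' = q))"

definition is_in_covering :: "('q,'a,'k) twa \<Rightarrow> ('r,'a,'k) twa \<Rightarrow> bool" where
  "is_in_covering M N \<longleftrightarrow> (\<exists>\<phi>. is_in_covering_via \<phi> M N)"

end

theory Submission
  imports Defs
begin

text \<open>Split every state p into two copies (p, 0) and (p, 1), the second component recording
the direction of the transitions allowed to leave that copy: a transition (p, a, d, q) of B
is duplicated into the transitions from (p, index of d) to both copies of q. Every copy is
initial, only the copy (p, 0) is final. The projection onto the first component is then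
an in-covering, since each transition of B arriving at q has exactly one lift arriving at
any given copy of q, and the result is \<delta>-local by construction.\<close>

definition dir_index :: "dir \<Rightarrow> nat" where
  "dir_index d = (case d of Lft \<Rightarrow> 0 | Rgt \<Rightarrow> 1)"

lemma dir_index_cases: "dir_index d = 0 \<or> dir_index d = 1"
  by (cases d) (simp_all add: dir_index_def)

lemma dir_index_inject [simp]: "dir_index d = dir_index d' \<longleftrightarrow> d = d'"
  by (cases d; cases d') (simp_all add: dir_index_def)

definition dir_split :: "('q, 'a, 'k) twa \<Rightarrow> ('q \<times> nat, 'a, 'k) twa" where
  "dir_split B = \<lparr> states = states B \<times> {0, 1}, alph = alph B,
     trans = (\<lambda>(p, n) a d (q, m). if n = dir_index d \<and> m \<le> 1 then trans B p a d q else None),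
     init = (\<lambda>(p, n). if n \<le> 1 then init B p else None),
     fin = (\<lambda>(p, n). if n = 0 then fin B p else None) \<rparr>"

lemma states_dir_split [simp]: "states (dir_split B) = states B \<times> {0, 1}"
  and alph_dir_split [simp]: "alph (dir_split B) = alph B"
  and trans_dir_split: "trans (dir_split B) (p, n) a d (q, m) =
    (if n = dir_index d \<and> m \<le> 1 then trans B p a d q else None)"
  by (simp_all add: dir_split_def)

lemma init_supp_dir_split: "init_supp (dir_split B) = {(p, n). n \<le> 1 \<and> p \<in> init_supp B}"
  by (auto simp: init_supp_def dir_split_def split: if_splits)

lemma fin_supp_dir_split: "fin_supp (dir_split B) = {(p, n). n = 0 \<and> p \<in> fin_supp B}"
  by (auto simp: fin_supp_def dir_split_def split: if_splits)

lemma transitions_dir_split: "transitions (dir_split B) =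
    {((p, n), a, d, (q, m)). n = dir_index d \<and> m \<le> 1 \<and> (p, a, d, q) \<in> transitions B}"
  by (auto simp: transitions_def trans_dir_split split: if_splits)

lemma wf_twa_dir_split: "wf_twa B \<Longrightarrow> wf_twa (dir_split B)"
  using dir_index_cases unfolding wf_twa_def
  by (auto simp: init_supp_dir_split fin_supp_dir_split transitions_dir_split trans_dir_split
      split: prod.splits)

lemma delta_local_dir_split: "delta_local (dir_split B)"
  by (auto simp: delta_local_def transitions_dir_split src_def direction_def)

lemma lift_trans_fst_dir_split: "lift_trans fst ` transitions (dir_split B) = transitions B"
proof
  show "lift_trans fst ` transitions (dir_split B) \<subseteq> transitions B"
    by (auto simp: transitions_dir_split lift_trans_def)
  show "transitions B \<subseteq> lift_trans fst ` transitions (dir_split B)"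
  proof
    fix t assume t: "t \<in> transitions B"
    obtain p a d q where t_eq: "t = (p, a, d, q)" by (cases t)
    have "((p, dir_index d), a, d, (q, 0)) \<in> transitions (dir_split B)"
      using t t_eq by (simp add: transitions_dir_split)
    then show "t \<in> lift_trans fst ` transitions (dir_split B)"
      using t_eq by (force simp: lift_trans_def)
  qed
qed

lemma is_surj_morphism_fst_dir_split: "is_surj_morphism fst (dir_split B) B"
  unfolding is_surj_morphism_def is_morphism_def lift_trans_fst_dir_split
  by (auto simp: init_supp_dir_split fin_supp_dir_split trans_dir_split image_iff)
    (auto simp: dir_split_def)

lemma unique_lift_dir_split:
  assumes "(p, a, d, r) \<in> transitions B" and "m \<le> 1"
  shows "\<exists>!t'. t' \<in> transitions (dir_split B) \<and> lift_trans fst t' = (p, a, d, r) \<and> tgt t' = (r, m)"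
proof (rule ex1I)
  show "((p, dir_index d), a, d, (r, m)) \<in> transitions (dir_split B) \<and>
      lift_trans fst ((p, dir_index d), a, d, (r, m)) = (p, a, d, r) \<and>
      tgt ((p, dir_index d), a, d, (r, m)) = (r, m)"
    using assms by (simp add: transitions_dir_split lift_trans_def tgt_def)
next
  fix t' assume "t' \<in> transitions (dir_split B) \<and> lift_trans fst t' = (p, a, d, r) \<and> tgt t' = (r, m)"
  then show "t' = ((p, dir_index d), a, d, (r, m))"
    by (auto simp: transitions_dir_split lift_trans_def tgt_def)
qed

lemma is_in_covering_via_fst_dir_split:
  assumes "wf_twa B"
  shows "is_in_covering_via fst (dir_split B) B"
  unfolding is_in_covering_via_def
proof (intro conjI is_surj_morphism_fst_dir_split ballI impI)
  fix r assume "r \<in> init_supp B"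
  then show "{p \<in> states (dir_split B). fst p = r} \<subseteq> init_supp (dir_split B)"
    by (auto simp: init_supp_dir_split)
next
  fix r assume "r \<in> fin_supp B"
  then have "r \<in> states B"
    using assms by (auto simp: wf_twa_def)
  with \<open>r \<in> fin_supp B\<close>
  show "\<exists>!p. p \<in> states (dir_split B) \<and> fst p = r \<and> p \<in> fin_supp (dir_split B)"
    by (intro ex1I[of _ "(r, 0)"]) (auto simp: fin_supp_dir_split)
next
  fix t q assume t: "t \<in> transitions B" and q: "q \<in> states (dir_split B)" "fst q = tgt t"
  obtain p a d r where t_eq: "t = (p, a, d, r)" by (cases t)
  obtain m where "q = (r, m)" "m \<le> 1"
    using q t_eq by (cases q) (auto simp: tgt_def)
  then show "\<exists>!t'. t' \<in> transitions (dir_split B) \<and> lift_trans fst t' = t \<and> tgt t' = q"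
    using t t_eq by (simp add: unique_lift_dir_split)
qed

theorem mainTheorem3:
  fixes B :: "('q, 'a, 'k :: semiring_1) twa"
  assumes "wf_twa B"
  shows "\<exists>A :: ('q \<times> nat, 'a, 'k) twa.
           wf_twa A \<and> delta_local A \<and> is_in_covering A B"
  using assms wf_twa_dir_split delta_local_dir_split is_in_covering_via_fst_dir_split
  unfolding is_in_covering_def by blast

end
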